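(* For every Hopfian group $G$, $SC(G)=C(G)-1$.
   Context: In the category of groups, $X\leqslant^d G$ means there are homomorphisms $f:X\to G$, $g:G\to X$ with $g\circ f=\mathrm{id}_X$; $X<^s G$ means $X\leqslant^d G$ holds but $G\leqslant^d X$ fails. $C(G)$ is the number of isomorphism classes of groups $X$ with $X\leqslant^d G$ and $SC(G)$ the number of isomorphism classes of groups $X$ with $X<^s G$. A group is Hopfian if every surjective endomorphism is an automorphism. *)

theory Defs
  imports "HOL-Algebra.Group" "HOL-Library.Equipollence"
begin

definition retract_of :: "('a, 'c) monoid_scheme \<Rightarrow> ('b, 'd) monoid_scheme \<Rightarrow> bool"  (infix \<open>\<le>d\<close> 50) where
  "X \<le>d G \<longleftrightarrow> (\<exists>f g. f \<in> hom X G \<and> g \<in> hom G X \<and> (\<forall>x \<in> carrier X. g (f x) = x))"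

definition strict_retract_of :: "('a, 'c) monoid_scheme \<Rightarrow> ('b, 'd) monoid_scheme \<Rightarrow> bool"  (infix \<open><s\<close> 50) where
  "X <s G \<longleftrightarrow> X \<le>d G \<and> \<not> (G \<le>d X)"

definition hopfian :: "('a, 'c) monoid_scheme \<Rightarrow> bool" where
  "hopfian G \<longleftrightarrow> (\<forall>h \<in> hom G G. h ` carrier G = carrier G \<longrightarrow> h \<in> iso G G)"

definition iso_class :: "'a monoid \<Rightarrow> 'a monoid set" where
  "iso_class X = {Y. group Y \<and> Y \<cong> X}"

text \<open>The set of isomorphism classes counted by C(G) resp. SC(G).  Every retract of G is
  isomorphic to a subgroup of G, so representatives on the element type of G suffice.\<close>
definition C_classes :: "'a monoid \<Rightarrow> 'a monoid set set" where
  "C_classes G = iso_class ` {X. group X \<and> X \<le>d G}"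

definition SC_classes :: "'a monoid \<Rightarrow> 'a monoid set set" where
  "SC_classes G = iso_class ` {X. group X \<and> X <s G}"

end

theory Submission
  imports Defs
begin

text \<open>A retraction of G onto X composed with a retraction of X onto G is a surjective
  endomorphism of G; for Hopfian G it is injective, hence so is the retraction of G onto X,
  which is therefore an isomorphism.  So the strict retracts of a Hopfian group are exactly
  its retracts not isomorphic to it, and the only class lost in passing from C(G) to SC(G)
  is the class of G itself.\<close>

lemma iso_imp_retract_of:
  assumes "group A" and "A \<cong> B"
  shows "B \<le>d A"
proof -
  obtain h where h: "h \<in> iso A B" using assms(2) unfolding is_iso_def by blast
  have "inv_into (carrier A) h \<in> hom B A"
    using group.iso_set_sym[OF assms(1) h] by (rule iso_imp_homomorphism)
  moreover have "\<forall>x\<in>carrier B. h (inv_into (carrier A) h x) = x"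
    using h by (auto simp: iso_iff f_inv_into_f)
  ultimately show ?thesis
    using iso_imp_homomorphism[OF h] unfolding retract_of_def by blast
qed

lemma retract_of_refl:
  assumes "group G"
  shows "G \<le>d G"
  using iso_imp_retract_of[OF assms iso_refl] .

lemma left_inverse_hom_surj:
  assumes "f \<in> hom X G" and "g \<in> hom G X" and "\<forall>x\<in>carrier X. g (f x) = x"
  shows "g ` carrier G = carrier X"
proof
  show "g ` carrier G \<subseteq> carrier X" using assms(2) by (auto simp: hom_def)
  show "carrier X \<subseteq> g ` carrier G"
    using assms by (force simp: hom_def)
qed

lemma hopfian_mutual_retract_iso:
  assumes "hopfian G" and "X \<le>d G" and "G \<le>d X"
  shows "G \<cong> X"
proof -
  obtain f g where f: "f \<in> hom X G" and g: "g \<in> hom G X"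
    and gf: "\<forall>x\<in>carrier X. g (f x) = x"
    using assms(2) unfolding retract_of_def by blast
  obtain f' g' where f': "f' \<in> hom G X" and g': "g' \<in> hom X G"
    and gf': "\<forall>x\<in>carrier G. g' (f' x) = x"
    using assms(3) unfolding retract_of_def by blast
  have g_onto: "g ` carrier G = carrier X" using left_inverse_hom_surj[OF f g gf] .
  have "(g' \<circ> g) ` carrier G = carrier G"
    using g_onto left_inverse_hom_surj[OF f' g' gf'] by (metis image_comp)
  then have "g' \<circ> g \<in> iso G G"
    using assms(1) hom_compose[OF g g'] unfolding hopfian_def by blast
  then have "inj_on g (carrier G)"
    using inj_on_imageI2 by (auto simp: iso_iff)
  then have "g \<in> iso G X" using g g_onto by (simp add: iso_iff)
  then show ?thesis by (rule is_isoI)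
qed

lemma hopfian_strict_retract_iff_not_iso:
  assumes "group G" and "hopfian G" and "group X" and "X \<le>d G"
  shows "X <s G \<longleftrightarrow> \<not> X \<cong> G"
proof
  assume "X <s G"
  then show "\<not> X \<cong> G"
    using iso_imp_retract_of[OF assms(3)] unfolding strict_retract_of_def by blast
next
  assume "\<not> X \<cong> G"
  moreover have "G \<le>d X \<Longrightarrow> X \<cong> G"
    using hopfian_mutual_retract_iso[OF assms(2,4)] group.iso_sym[OF assms(1)] by blast
  ultimately show "X <s G" using assms(4) unfolding strict_retract_of_def by blast
qed

lemma iso_class_eq_iff:
  assumes "group X" and "group G"
  shows "iso_class X = iso_class G \<longleftrightarrow> X \<cong> G"
proof
  assume "iso_class X = iso_class G"
  moreover have "X \<in> iso_class X" using assms(1) iso_refl unfolding iso_class_def by blast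
  ultimately show "X \<cong> G" unfolding iso_class_def by blast
next
  assume "X \<cong> G"
  then show "iso_class X = iso_class G"
    using group.iso_sym[OF assms(1)] iso_trans unfolding iso_class_def by blast
qed

lemma hopfian_SC_classes:
  assumes "group G" and "hopfian G"
  shows "SC_classes G = C_classes G - {iso_class G}"
proof -
  have "{X. group X \<and> X <s G} = {X. group X \<and> X \<le>d G \<and> iso_class X \<noteq> iso_class G}"
    using hopfian_strict_retract_iff_not_iso[OF assms] iso_class_eq_iff[OF _ assms(1)]
    unfolding strict_retract_of_def by blast
  then show ?thesis unfolding SC_classes_def C_classes_def by blast
qed

theorem corollary3p3:
  fixes G :: "'a monoid"
  assumes "group G" and "hopfian G"
  shows "\<exists>c \<in> C_classes G. SC_classes G \<approx> C_classes G - {c}"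
proof
  show "iso_class G \<in> C_classes G"
    using assms(1) retract_of_refl unfolding C_classes_def by blast
  show "SC_classes G \<approx> C_classes G - {iso_class G}"
    using hopfian_SC_classes[OF assms] by (simp add: eqpoll_refl)
qed

end
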